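(* Let $a_1,a_2,a_3>0$, $\beta\in\mathbb{R}$, $\mu>0$, and let $\mathcal{A}^\mu(\beta)$ be the operator on the periodic graph $\mathcal{G}$ described in the context. Let $\omega>0$ with $\omega\notin\{\pi\mathbb{Z}/a_1\}\cup\{\pi\mathbb{Z}/a_2\}\cup\{\pi\mathbb{Z}/a_3\}$. Then $u\in D(\mathcal{A}^\mu(\beta))$ is an eigenfunction of $\mathcal{A}^\mu(\beta)$ associated with $\lambda=\omega^2$ (i.e. $\mathcal{A}^\mu(\beta)u=\omega^2 u$) if and only if the sequence of vertex values $(\mathbf{u}_{k,\ell})_{(k,\ell)\in\mathbb{Z}^2}$ belongs to $\ell_2(\mathbb{Z}^2)$ and satisfies $$\frac{\mathbf{u}_{k+1,\ell}+\mathbf{u}_{k-1,\ell}}{\sin(\omega a_1)}+\frac{\mathbf{u}_{k,\ell+1}+\mathbf{u}_{k,\ell-1}}{\sin(\omega a_2)}-2g_\beta(\omega)\mathbf{u}_{k,\ell}=0\quad\forall (k,\ell)\in\mathbb{Z}^2\setminus\{(0,0)\},$$ $$\frac{\mathbf{u}_{1,0}+\mathbf{u}_{-1,0}}{\sin(\omega a_1)}+\frac{\mathbf{u}_{0,1}+\mathbf{u}_{0,-1}}{\sin(\omega a_2)}-2g_\beta(\omega)\mathbf{u}_{0,0}=2(\mu-1)\frac{\cos(\omega a_3)-\cos\beta}{\sin(\omega a_3)}\mathbf{u}_{0,0},$$ where $g_\beta(\omega)=\frac{1}{\tan(\omega a_1)}+\frac{1}{\tan(\omega a_2)}+\frac{\cos(\omega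 a_3)-\cos\beta}{\sin(\omega a_3)}$.
   Context: The graph $\mathcal{G}\subset\mathbb{R}^3$ has vertices $v_{k,\ell}=(ka_1,\ell a_2,0)$ and $v^\pm_{k,\ell}=(ka_1,\ell a_2,\pm a_3/2)$, $(k,\ell)\in\mathbb{Z}^2$, and edges $e_{k+1/2,\ell}=[v_{k,\ell},v_{k+1,\ell}]$ (parametrized by $x_1\in[ka_1,(k+1)a_1]$), $e_{k,\ell+1/2}=[v_{k,\ell},v_{k,\ell+1}]$ (parametrized by $x_2\in[\ell a_2,(\ell+1)a_2]$), and $e^\pm_{k,\ell}=[v_{k,\ell},v^\pm_{k,\ell}]$ (parametrized by $x_3\in[0,a_3/2]$, resp. $x_3\in[-a_3/2,0]$). For a function $u$ on $\mathcal{G}$, $\mathbf{u}_{k,\ell}$, $\mathbf{u}^\pm_{k,\ell}$ are its values at $v_{k,\ell}$, $v^\pm_{k,\ell}$, and $u_{k+1/2,\ell}(x_1)$, $u_{k,\ell+1/2}(x_2)$, $u^\pm_{k,\ell}(x_3)$ its restrictions to the edges. Weights: $w^\mu_{k,\ell}=\mu$ if $k=\ell=0$ and $1$ otherwise. $L_2^\mu(\mathcal{G})$ is the space of functions with finite norm $\|u\|^2=\sum_{(k,\ell)}\big(w^\mu_{k,\ell}\sum_\pm\|u^\pm_{k,\ell}\|^2_{L_2(e^\pm_{k,\ell})}+\|u_{k+1/2,\ell}\|^2_{L_2}+\|u_{k,\ell+1/2}\|^2_{L_2}\big)$; $H^2(\mathcal{G})$ is the space of continuous functions on $\mathcal{G}$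 with $\sum_{(k,\ell)}(\sum_\pm\|u^\pm_{k,\ell}\|^2_{H^2}+\|u_{k+1/2,\ell}\|^2_{H^2}+\|u_{k,\ell+1/2}\|^2_{H^2})<\infty$. The operator $\mathcal{A}^\mu(\beta)$ in $L_2^\mu(\mathcal{G})$ has domain the set of $u\in H^2(\mathcal{G})$ such that for all $(k,\ell)\in\mathbb{Z}^2$: $\mathbf{u}^+_{k,\ell}=e^{-i\beta}\mathbf{u}^-_{k,\ell}$, $(u^+_{k,\ell})'(a_3/2)=e^{-i\beta}(u^-_{k,\ell})'(-a_3/2)$, and the Kirchhoff condition $u'_{k+1/2,\ell}(ka_1)-u'_{k-1/2,\ell}(ka_1)+u'_{k,\ell+1/2}(\ell a_2)-u'_{k,\ell-1/2}(\ell a_2)+w^\mu_{k,\ell}\big((u^+_{k,\ell})'(0)-(u^-_{k,\ell})'(0)\big)=0$; it acts by $\mathcal{A}^\mu(\beta)u=-u''$ on each edge. It is self-adjoint for the weighted scalar product of $L_2^\mu(\mathcal{G})$. *)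

theory Defs
  imports "HOL-Analysis.Analysis"
begin

text \<open>A function on the graph is given by its restrictions to the edges:
  gh u k l  = u restricted to e_{k+1/2,l}, parametrized by x1 in [k a1, (k+1) a1];
  gv u k l  = u restricted to e_{k,l+1/2}, parametrized by x2 in [l a2, (l+1) a2];
  gp u k l  = u restricted to e^+_{k,l},  parametrized by x3 in [0, a3/2];
  gm u k l  = u restricted to e^-_{k,l},  parametrized by x3 in [-a3/2, 0].
  Values outside the parameter intervals are irrelevant.\<close>

record gfun =
  gh :: "int \<Rightarrow> int \<Rightarrow> real \<Rightarrow> complex"
  gv :: "int \<Rightarrow> int \<Rightarrow> real \<Rightarrow> complex"
  gp :: "int \<Rightarrow> int \<Rightarrow> real \<Rightarrow> complex"
  gm :: "int \<Rightarrow> int \<Rightarrow> real \<Rightarrow> complex"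

definition H2_rep ::
  "real \<Rightarrow> real \<Rightarrow> (real \<Rightarrow> complex) \<Rightarrow> (real \<Rightarrow> complex) \<Rightarrow> (real \<Rightarrow> complex) \<Rightarrow> bool" where
  "H2_rep a b f f1 f2 \<longleftrightarrow>
     set_integrable lborel {a..b} f2 \<and>
     set_integrable lborel {a..b} (\<lambda>x. (cmod (f2 x))\<^sup>2) \<and>
     (\<forall>x\<in>{a..b}. f1 x = f1 a + set_lebesgue_integral lborel {a..x} f2) \<and>
     (\<forall>x\<in>{a..b}. f x = f a + set_lebesgue_integral lborel {a..x} f1)"

definition H2_edge :: "real \<Rightarrow> real \<Rightarrow> (real \<Rightarrow> complex) \<Rightarrow> bool" where
  "H2_edge a b f \<longleftrightarrow> (\<exists>f1 f2. H2_rep a b f f1 f2)"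

text \<open>First and second derivative (the first is unique on [a,b], the second a.e.).\<close>
definition d1 :: "real \<Rightarrow> real \<Rightarrow> (real \<Rightarrow> complex) \<Rightarrow> real \<Rightarrow> complex" where
  "d1 a b f = (SOME f1. \<exists>f2. H2_rep a b f f1 f2)"

definition d2 :: "real \<Rightarrow> real \<Rightarrow> (real \<Rightarrow> complex) \<Rightarrow> real \<Rightarrow> complex" where
  "d2 a b f = (SOME f2. H2_rep a b f (d1 a b f) f2)"

definition H2_sqnorm :: "real \<Rightarrow> real \<Rightarrow> (real \<Rightarrow> complex) \<Rightarrow> real" where
  "H2_sqnorm a b f =
     set_lebesgue_integral lborel {a..b}
       (\<lambda>x. (cmod (f x))\<^sup>2 + (cmod (d1 a b f x))\<^sup>2 + (cmod (d2 a b f x))\<^sup>2)"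

definition wmu :: "real \<Rightarrow> int \<Rightarrow> int \<Rightarrow> real" where
  "wmu \<mu> k l = (if k = 0 \<and> l = 0 then \<mu> else 1)"

definition vtx :: "real \<Rightarrow> gfun \<Rightarrow> int \<Rightarrow> int \<Rightarrow> complex" where
  "vtx a1 u k l = gh u k l (of_int k * a1)"

definition in_H2G :: "real \<Rightarrow> real \<Rightarrow> real \<Rightarrow> gfun \<Rightarrow> bool" where
  "in_H2G a1 a2 a3 u \<longleftrightarrow>
     (\<forall>k l. H2_edge (of_int k * a1) (of_int (k+1) * a1) (gh u k l)
          \<and> H2_edge (of_int l * a2) (of_int (l+1) * a2) (gv u k l)
          \<and> H2_edge 0 (a3/2) (gp u k l)
          \<and> H2_edge (-a3/2) 0 (gm u k l)) \<and>
     (\<forall>k l. gh u (k-1) l (of_int k * a1) = gh u k l (of_int k * a1)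
          \<and> gv u k l (of_int l * a2) = gh u k l (of_int k * a1)
          \<and> gv u k (l-1) (of_int l * a2) = gh u k l (of_int k * a1)
          \<and> gp u k l 0 = gh u k l (of_int k * a1)
          \<and> gm u k l 0 = gh u k l (of_int k * a1)) \<and>
     ((\<lambda>(k,l). H2_sqnorm 0 (a3/2) (gp u k l) + H2_sqnorm (-a3/2) 0 (gm u k l)
             + H2_sqnorm (of_int k * a1) (of_int (k+1) * a1) (gh u k l)
             + H2_sqnorm (of_int l * a2) (of_int (l+1) * a2) (gv u k l)) summable_on UNIV)"

definition in_dom :: "real \<Rightarrow> real \<Rightarrow> real \<Rightarrow> real \<Rightarrow> real \<Rightarrow> gfun \<Rightarrow> bool" where
  "in_dom a1 a2 a3 \<mu> \<beta> u \<longleftrightarrow>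
     in_H2G a1 a2 a3 u \<and>
     (\<forall>k l.
        gp u k l (a3/2) = exp (- \<i> * of_real \<beta>) * gm u k l (-a3/2) \<and>
        d1 0 (a3/2) (gp u k l) (a3/2) = exp (- \<i> * of_real \<beta>) * d1 (-a3/2) 0 (gm u k l) (-a3/2) \<and>
        d1 (of_int k * a1) (of_int (k+1) * a1) (gh u k l) (of_int k * a1)
        - d1 (of_int (k-1) * a1) (of_int k * a1) (gh u (k-1) l) (of_int k * a1)
        + d1 (of_int l * a2) (of_int (l+1) * a2) (gv u k l) (of_int l * a2)
        - d1 (of_int (l-1) * a2) (of_int l * a2) (gv u k (l-1)) (of_int l * a2)
        + of_real (wmu \<mu> k l) * (d1 0 (a3/2) (gp u k l) 0 - d1 (-a3/2) 0 (gm u k l) 0) = 0)"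

definition edge_eig :: "real \<Rightarrow> real \<Rightarrow> real \<Rightarrow> (real \<Rightarrow> complex) \<Rightarrow> bool" where
  "edge_eig lam a b f \<longleftrightarrow> (AE x in lborel. x \<in> {a..b} \<longrightarrow> - d2 a b f x = of_real lam * f x)"

definition is_eig_eq :: "real \<Rightarrow> real \<Rightarrow> real \<Rightarrow> real \<Rightarrow> gfun \<Rightarrow> bool" where
  "is_eig_eq a1 a2 a3 lam u \<longleftrightarrow>
     (\<forall>k l. edge_eig lam (of_int k * a1) (of_int (k+1) * a1) (gh u k l)
          \<and> edge_eig lam (of_int l * a2) (of_int (l+1) * a2) (gv u k l)
          \<and> edge_eig lam 0 (a3/2) (gp u k l)
          \<and> edge_eig lam (-a3/2) 0 (gm u k l))"

definition g_beta :: "real \<Rightarrow> real \<Rightarrow> real \<Rightarrow> real \<Rightarrow> real \<Rightarrow> real" where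
  "g_beta a1 a2 a3 \<beta> \<omega> = 1 / tan (\<omega> * a1) + 1 / tan (\<omega> * a2)
      + (cos (\<omega> * a3) - cos \<beta>) / sin (\<omega> * a3)"

definition in_l2 :: "(int \<Rightarrow> int \<Rightarrow> complex) \<Rightarrow> bool" where
  "in_l2 c \<longleftrightarrow> (\<lambda>(k,l). (cmod (c k l))\<^sup>2) summable_on UNIV"

definition disc_system :: "real \<Rightarrow> real \<Rightarrow> real \<Rightarrow> real \<Rightarrow> real \<Rightarrow> real \<Rightarrow> (int \<Rightarrow> int \<Rightarrow> complex) \<Rightarrow> bool" where
  "disc_system a1 a2 a3 \<mu> \<beta> \<omega> c \<longleftrightarrow>
     (\<forall>k l. (k, l) \<noteq> (0, 0) \<longrightarrow>
        (c (k+1) l + c (k-1) l) / of_real (sin (\<omega> * a1))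
        + (c k (l+1) + c k (l-1)) / of_real (sin (\<omega> * a2))
        - 2 * of_real (g_beta a1 a2 a3 \<beta> \<omega>) * c k l = 0) \<and>
     (c 1 0 + c (-1) 0) / of_real (sin (\<omega> * a1))
        + (c 0 1 + c 0 (-1)) / of_real (sin (\<omega> * a2))
        - 2 * of_real (g_beta a1 a2 a3 \<beta> \<omega>) * c 0 0
      = 2 * of_real (\<mu> - 1) * of_real ((cos (\<omega> * a3) - cos \<beta>) / sin (\<omega> * a3)) * c 0 0"

end

theory Submission
  imports Defs
begin

text \<open>
  On an edge of length L with sin (\<omega> L) \<noteq> 0, a solution of -u'' = \<omega>^2 u is determined by its two
  end values, so its end derivatives are explicit combinations of vertex values, and the Kirchhoff
  sum at v_{k,l} equals \<omega> times the left side minus the right side of the discrete equation at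
  (k, l). The loop of length a3 with the twist e^{-i\<beta>} contributes the jump
  -2 \<omega> (cos (\<omega> a3) - cos \<beta>) / sin (\<omega> a3) times the vertex value; the weight \<mu> at the origin
  produces the extra term there. Conversely, extending vertex values edgewise by these solutions
  gives a function in the domain. Square summability matches finite H^2 norm because on each edge
  the H^2 norm of a solution is bounded above by the squared end values and, since (u, u'/\<omega>)
  rotates rigidly, below by the squared value at one end.
\<close>

section \<open>Functions in H^2 of an interval\<close>

lemma sets_lborel_eq_sigma_atMost:
  "sets lborel = sigma_sets UNIV (range (\<lambda>a::real. {..a}))"
  unfolding sets_lborel by (subst borel_eq_atMost) (rule sets_measure_of, simp)

text \<open>Half-lines form an intersection-stable generator of the Borel sets, so by Dynkin's
  lemma a vanishing integral over every half-line vanishes over every Borel set.\<close>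
lemma AE_zero_if_set_integral_atMost_zero:
  fixes h :: "real \<Rightarrow> 'b::{banach, second_countable_topology}"
  assumes int: "integrable lborel h"
    and half_lines: "\<And>x. set_lebesgue_integral lborel {..x} h = 0"
    and total: "integral\<^sup>L lborel h = 0"
  shows "AE x in lborel. h x = 0"
proof (rule sigma_finite_measure.density_zero[OF sigma_finite_lborel int])
  fix A :: "real set"
  assume "A \<in> sets lborel"
  then have A: "A \<in> sigma_sets UNIV (range atMost)"
    using sets_lborel_eq_sigma_atMost by simp
  have stable: "Int_stable (range (\<lambda>a::real. {..a}))"
    by (auto simp: Int_stable_def)
  show "set_lebesgue_integral lborel A h = 0"
  proof (induction rule: sigma_sets_induct_disjoint[OF stable _ A])
    case 1
    show ?case by simp
  next
    case (2 B)
    then show ?case using half_lines by auto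
  next
    case 3
    show ?case by (simp add: set_lebesgue_integral_def)
  next
    case (4 B)
    then have B: "B \<in> sets lborel" using sets_lborel_eq_sigma_atMost by simp
    have "(\<lambda>x. indicator (UNIV - B) x *\<^sub>R h x) = (\<lambda>x. h x - indicator B x *\<^sub>R h x)"
      by (auto simp: indicator_def fun_eq_iff)
    then have "set_lebesgue_integral lborel (UNIV - B) h
        = integral\<^sup>L lborel h - set_lebesgue_integral lborel B h"
      unfolding set_lebesgue_integral_def
      by (simp only:) (rule Bochner_Integration.integral_diff[OF int integrable_mult_indicator[OF B int]])
    then show ?case using 4 total by simp
  next
    case (5 A)
    have As: "A i \<in> sets lborel" for i using 5(2) sets_lborel_eq_sigma_atMost by auto
    have "set_lebesgue_integral lborel (\<Union>i. A i) h = (\<Sum>i. set_lebesgue_integral lborel (A i) h)"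
    proof (rule lebesgue_integral_countable_add)
      show "A i \<inter> A j = {}" if "i \<noteq> j" for i j
        using 5(1) that by (simp add: disjoint_family_on_def)
      show "set_integrable lborel (\<Union> (range A)) h"
        unfolding set_integrable_def using As by (intro integrable_mult_indicator int) auto
    qed (use As in auto)
    then show ?case using 5(3) by simp
  qed
qed

lemma AE_eq_if_set_integral_Icc_eq:
  fixes f g :: "real \<Rightarrow> 'b::{banach, second_countable_topology}"
  assumes f: "set_integrable lborel {a..b} f" and g: "set_integrable lborel {a..b} g"
    and eq: "\<And>x. x \<in> {a..b} \<Longrightarrow>
      set_lebesgue_integral lborel {a..x} f = set_lebesgue_integral lborel {a..x} g"
  shows "AE x in lborel. x \<in> {a..b} \<longrightarrow> f x = g x"
proof (cases "a \<le> b")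
  case False
  then show ?thesis by simp
next
  case ab: True
  define h where "h x = indicator {a..b} x *\<^sub>R (f x - g x)" for x
  have int: "integrable lborel h"
    using set_integral_diff(1)[OF f g] unfolding set_integrable_def h_def[abs_def] .
  have vanish: "set_lebesgue_integral lborel {a..y} (\<lambda>x. f x - g x) = 0" if y: "y \<in> {a..b}" for y
  proof -
    have "set_integrable lborel {a..y} f" "set_integrable lborel {a..y} g"
      using f g y by (auto intro: set_integrable_subset)
    then show ?thesis using eq[OF y] by (simp add: set_integral_diff)
  qed
  have "AE x in lborel. h x = 0"
  proof (rule AE_zero_if_set_integral_atMost_zero[OF int])
    fix y :: real
    have hy: "(\<lambda>x. indicator {..y} x *\<^sub>R h x)
        = (\<lambda>x. indicator ({..y} \<inter> {a..b}) x *\<^sub>R (f x - g x))"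
      by (auto simp: h_def indicator_def fun_eq_iff)
    show "set_lebesgue_integral lborel {..y} h = 0"
    proof (cases "y < a")
      case True
      then have "{..y} \<inter> {a..b} = {}" by auto
      then show ?thesis unfolding set_lebesgue_integral_def hy by simp
    next
      case False
      then have "{..y} \<inter> {a..b} = {a..min y b}" "min y b \<in> {a..b}" using ab by auto
      then show ?thesis using vanish[of "min y b"] unfolding set_lebesgue_integral_def hy by simp
    qed
  next
    show "integral\<^sup>L lborel h = 0"
      using vanish[of b] ab unfolding h_def set_lebesgue_integral_def by simp
  qed
  then show ?thesis by eventually_elim (auto simp: h_def)
qed

lemma set_integral_Icc_eq_integral:
  fixes f :: "real \<Rightarrow> 'b::euclidean_space"
  assumes "set_integrable lborel {a..b} f" "x \<in> {a..b}"
  shows "set_lebesgue_integral lborel {a..x} f = integral {a..x} f"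
  using assms by (intro set_borel_integral_eq_integral(2) set_integrable_subset[OF assms(1)]) auto

lemma
  fixes f f1 f2 :: "real \<Rightarrow> complex"
  assumes H: "H2_rep a b f f1 f2"
  shows continuous_on_H2_rep_deriv: "continuous_on {a..b} f1"
    and H2_rep_has_vector_derivative:
      "x \<in> {a..b} \<Longrightarrow> (f has_vector_derivative f1 x) (at x within {a..b})"
    and continuous_on_H2_rep: "continuous_on {a..b} f"
proof -
  have f2: "set_integrable lborel {a..b} f2"
    and f1_eq: "\<And>x. x \<in> {a..b} \<Longrightarrow> f1 x = f1 a + set_lebesgue_integral lborel {a..x} f2"
    and f_eq: "\<And>x. x \<in> {a..b} \<Longrightarrow> f x = f a + set_lebesgue_integral lborel {a..x} f1"
    using H unfolding H2_rep_def by blast+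
  have "f2 integrable_on {a..b}" using set_borel_integral_eq_integral(1)[OF f2] .
  then have "continuous_on {a..b} (\<lambda>x. f1 a + integral {a..x} f2)"
    by (intro continuous_intros indefinite_integral_continuous_1)
  then show f1_cont: "continuous_on {a..b} f1"
    by (rule continuous_on_eq) (use f1_eq set_integral_Icc_eq_integral[OF f2] in presburger)
  have f1: "set_integrable lborel {a..b} f1"
    by (rule borel_integrable_atLeastAtMost'[OF f1_cont])
  show deriv: "(f has_vector_derivative f1 x) (at x within {a..b})" if x: "x \<in> {a..b}" for x
  proof (rule has_vector_derivative_transform[OF x])
    show "((\<lambda>x. integral {a..x} f1 + f a) has_vector_derivative f1 x) (at x within {a..b})"
      unfolding has_vector_derivative_add_const by (rule integral_has_vector_derivative[OF f1_cont x])
    show "f y = integral {a..y} f1 + f a" if "y \<in> {a..b}" for y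
      using f_eq[OF that] set_integral_Icc_eq_integral[OF f1 that] by simp
  qed
  show "continuous_on {a..b} f" by (rule continuous_on_vector_derivative[OF deriv])
qed

lemma H2_rep_if_derivatives:
  fixes f f1 f2 :: "real \<Rightarrow> complex"
  assumes f2: "continuous_on {a..b} f2"
    and f: "\<And>x. x \<in> {a..b} \<Longrightarrow> (f has_vector_derivative f1 x) (at x within {a..b})"
    and f1: "\<And>x. x \<in> {a..b} \<Longrightarrow> (f1 has_vector_derivative f2 x) (at x within {a..b})"
  shows "H2_rep a b f f1 f2"
proof -
  have ftc: "g x = g a + set_lebesgue_integral lborel {a..x} g'"
    if x: "x \<in> {a..b}" and g': "continuous_on {a..b} g'"
      and g: "\<And>y. y \<in> {a..b} \<Longrightarrow> (g has_vector_derivative g' y) (at y within {a..b})"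
    for g g' :: "real \<Rightarrow> complex" and x
  proof -
    have "(g' has_integral (g x - g a)) {a..x}"
      using x by (intro fundamental_theorem_of_calculus)
        (auto intro: has_vector_derivative_within_subset[OF g])
    then show ?thesis
      using set_integral_Icc_eq_integral[OF borel_integrable_atLeastAtMost'[OF g'] x]
      by (simp add: integral_unique)
  qed
  have f1_cont: "continuous_on {a..b} f1"
    by (rule continuous_on_vector_derivative[OF f1])
  show ?thesis
    unfolding H2_rep_def
  proof (intro conjI ballI)
    show "set_integrable lborel {a..b} f2" "set_integrable lborel {a..b} (\<lambda>x. (cmod (f2 x))\<^sup>2)"
      by (intro borel_integrable_atLeastAtMost' continuous_intros f2)+
    show "f1 x = f1 a + set_lebesgue_integral lborel {a..x} f2" if "x \<in> {a..b}" for x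
      by (rule ftc[OF that f2 f1])
    show "f x = f a + set_lebesgue_integral lborel {a..x} f1" if "x \<in> {a..b}" for x
      by (rule ftc[OF that f1_cont f])
  qed
qed

lemma H2_rep_d1_d2:
  assumes "H2_edge a b f"
  shows "H2_rep a b f (d1 a b f) (d2 a b f)"
proof -
  have "\<exists>f2. H2_rep a b f (d1 a b f) f2"
    using assms unfolding H2_edge_def d1_def by (rule someI_ex)
  then show ?thesis unfolding d2_def by (rule someI_ex)
qed

lemma d1_eq_if_H2_rep:
  assumes H: "H2_rep a b f f1 f2" and ab: "a < b" and x: "x \<in> {a..b}"
  shows "d1 a b f x = f1 x"
proof -
  have "H2_rep a b f (d1 a b f) (d2 a b f)"
    using H by (intro H2_rep_d1_d2) (auto simp: H2_edge_def)
  then show ?thesis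
    using vector_derivative_unique_within_closed_interval[of a b x f "d1 a b f x" "f1 x"] ab x
      H2_rep_has_vector_derivative[OF _ x] H
    by simp
qed

lemma d2_AE_eq_if_H2_rep:
  assumes H: "H2_rep a b f f1 f2" and ab: "a < b"
  shows "AE x in lborel. x \<in> {a..b} \<longrightarrow> d2 a b f x = f2 x"
proof (rule AE_eq_if_set_integral_Icc_eq)
  have H': "H2_rep a b f (d1 a b f) (d2 a b f)"
    using H by (intro H2_rep_d1_d2) (auto simp: H2_edge_def)
  then show "set_integrable lborel {a..b} (d2 a b f)" unfolding H2_rep_def by blast
  show "set_integrable lborel {a..b} f2" using H unfolding H2_rep_def by blast
  fix x assume x: "x \<in> {a..b}"
  have "d1 a b f x = d1 a b f a + set_lebesgue_integral lborel {a..x} (d2 a b f)"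
    using H' x unfolding H2_rep_def by blast
  moreover have "f1 x = f1 a + set_lebesgue_integral lborel {a..x} f2"
    using H x unfolding H2_rep_def by blast
  moreover have "d1 a b f x = f1 x" "d1 a b f a = f1 a"
    using d1_eq_if_H2_rep[OF H ab] x ab by auto
  ultimately show "set_lebesgue_integral lborel {a..x} (d2 a b f)
      = set_lebesgue_integral lborel {a..x} f2"
    by simp
qed

lemma set_integral_cong_AE_if_set_integrable:
  fixes f g :: "real \<Rightarrow> 'b::{banach, second_countable_topology}"
  assumes "set_integrable lborel A f" "set_integrable lborel A g"
    and "AE x in lborel. x \<in> A \<longrightarrow> f x = g x"
  shows "set_lebesgue_integral lborel A f = set_lebesgue_integral lborel A g"
  unfolding set_lebesgue_integral_def
proof (rule integral_cong_AE)
  show "(\<lambda>x. indicat_real A x *\<^sub>R f x) \<in> borel_measurable lborel"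
    "(\<lambda>x. indicat_real A x *\<^sub>R g x) \<in> borel_measurable lborel"
    using assms(1,2) unfolding set_integrable_def by (auto intro: borel_measurable_integrable)
  show "AE x in lborel. indicat_real A x *\<^sub>R f x = indicat_real A x *\<^sub>R g x"
    using assms(3) by eventually_elim (auto simp: indicator_def)
qed

lemma set_integrable_H2_density:
  assumes H: "H2_rep a b f f1 f2"
  shows "set_integrable lborel {a..b} (\<lambda>x. (cmod (f x))\<^sup>2 + (cmod (f1 x))\<^sup>2 + (cmod (f2 x))\<^sup>2)"
proof (intro set_integral_add(1))
  show "set_integrable lborel {a..b} (\<lambda>x. (cmod (f x))\<^sup>2)"
    "set_integrable lborel {a..b} (\<lambda>x. (cmod (f1 x))\<^sup>2)"
    by (intro borel_integrable_atLeastAtMost' continuous_intros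
        continuous_on_H2_rep[OF H] continuous_on_H2_rep_deriv[OF H])+
  show "set_integrable lborel {a..b} (\<lambda>x. (cmod (f2 x))\<^sup>2)"
    using H unfolding H2_rep_def by blast
qed

text \<open>Any representation of the derivatives may be used to compute the H^2 norm, since the
  first derivative is unique and the second one unique almost everywhere.\<close>
lemma H2_sqnorm_eq:
  assumes H: "H2_rep a b f f1 f2" and ab: "a < b"
  shows "H2_sqnorm a b f
    = (LINT x:{a..b}|lborel. (cmod (f x))\<^sup>2 + (cmod (f1 x))\<^sup>2 + (cmod (f2 x))\<^sup>2)"
  unfolding H2_sqnorm_def
proof (rule set_integral_cong_AE_if_set_integrable)
  show "set_integrable lborel {a..b}
      (\<lambda>x. (cmod (f x))\<^sup>2 + (cmod (d1 a b f x))\<^sup>2 + (cmod (d2 a b f x))\<^sup>2)"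
    using H by (intro set_integrable_H2_density H2_rep_d1_d2) (auto simp: H2_edge_def)
  show "set_integrable lborel {a..b} (\<lambda>x. (cmod (f x))\<^sup>2 + (cmod (f1 x))\<^sup>2 + (cmod (f2 x))\<^sup>2)"
    by (rule set_integrable_H2_density[OF H])
  show "AE x in lborel. x \<in> {a..b} \<longrightarrow> (cmod (f x))\<^sup>2 + (cmod (d1 a b f x))\<^sup>2
      + (cmod (d2 a b f x))\<^sup>2 = (cmod (f x))\<^sup>2 + (cmod (f1 x))\<^sup>2 + (cmod (f2 x))\<^sup>2"
    using d2_AE_eq_if_H2_rep[OF H ab] by eventually_elim (simp add: d1_eq_if_H2_rep[OF H ab])
qed

lemma H2_sqnorm_nonneg: "0 \<le> H2_sqnorm a b f"
  unfolding H2_sqnorm_def set_lebesgue_integral_def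
  by (rule integral_nonneg_AE) (auto simp: indicator_def)

lemma H2_sqnorm_le:
  assumes H: "H2_rep a b f f1 f2" and ab: "a < b"
    and bound: "\<And>x. x \<in> {a..b} \<Longrightarrow> (cmod (f x))\<^sup>2 + (cmod (f1 x))\<^sup>2 + (cmod (f2 x))\<^sup>2 \<le> K"
  shows "H2_sqnorm a b f \<le> (b - a) * K"
proof -
  have "H2_sqnorm a b f \<le> (LINT x:{a..b}|lborel. K)"
    unfolding H2_sqnorm_eq[OF H ab]
    by (rule set_integral_mono[OF set_integrable_H2_density[OF H] _ bound])
      (auto intro: borel_integrable_atLeastAtMost')
  also have "\<dots> = (b - a) * K"
    using ab by (simp add: set_integral_const emeasure_lborel_Icc)
  finally show ?thesis .
qed

lemma H2_sqnorm_ge: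
  assumes H: "H2_rep a b f f1 f2" and ab: "a < b"
    and bound: "\<And>x. x \<in> {a..b} \<Longrightarrow> K \<le> (cmod (f x))\<^sup>2 + (cmod (f1 x))\<^sup>2"
  shows "(b - a) * K \<le> H2_sqnorm a b f"
proof -
  have "(b - a) * K = (LINT x:{a..b}|lborel. K)"
    using ab by (simp add: set_integral_const emeasure_lborel_Icc)
  also have "\<dots> \<le> H2_sqnorm a b f"
    unfolding H2_sqnorm_eq[OF H ab]
  proof (rule set_integral_mono[OF _ set_integrable_H2_density[OF H]])
    show "set_integrable lborel {a..b} (\<lambda>x. K)" by (auto intro: borel_integrable_atLeastAtMost')
    show "K \<le> (cmod (f x))\<^sup>2 + (cmod (f1 x))\<^sup>2 + (cmod (f2 x))\<^sup>2" if "x \<in> {a..b}" for x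
      using bound[OF that] by (simp add: add_increasing2)
  qed
  finally show ?thesis .
qed

section \<open>Solutions of the eigenvalue equation on an edge\<close>

definition harmonic :: "real \<Rightarrow> complex \<Rightarrow> complex \<Rightarrow> real \<Rightarrow> real \<Rightarrow> complex" where
  "harmonic \<omega> A B s x = A * of_real (cos (\<omega> * (x - s))) + B * of_real (sin (\<omega> * (x - s)))"

lemma harmonic_at_base [simp]: "harmonic \<omega> A B s s = A"
  by (simp add: harmonic_def)

lemma harmonic_has_vector_derivative:
  "(harmonic \<omega> A B s has_vector_derivative harmonic \<omega> (of_real \<omega> * B) (- of_real \<omega> * A) s x)
     (at x within S)"
proof -
  have "(harmonic \<omega> A B s has_vector_derivative
      A * of_real (- \<omega> * sin (\<omega> * (x - s))) + B * of_real (\<omega> * cos (\<omega> * (x - s)))) (at x within S)"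
    unfolding harmonic_def[abs_def]
    by (intro has_vector_derivative_add has_vector_derivative_mult_right has_vector_derivative_of_real)
      (auto intro!: derivative_eq_intros)
  then show ?thesis by (simp add: harmonic_def algebra_simps)
qed

lemma harmonic_derivative_derivative:
  "harmonic \<omega> (of_real \<omega> * (- of_real \<omega> * A)) (- of_real \<omega> * (of_real \<omega> * B)) s x
     = - of_real (\<omega>\<^sup>2) * harmonic \<omega> A B s x"
  by (simp add: harmonic_def algebra_simps power2_eq_square)

lemma harmonic_scaled_translate:
  assumes "x' - s' = x - s"
  shows "harmonic \<omega> (z * A) (z * B) s' x' = z * harmonic \<omega> A B s x"
  unfolding harmonic_def assms by (simp add: algebra_simps)

lemma continuous_on_harmonic: "continuous_on S (harmonic \<omega> A B s)"
  unfolding harmonic_def[abs_def] by (intro continuous_intros)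

lemma square_sum_le: "((x::real) + y)\<^sup>2 \<le> 2 * (x\<^sup>2 + y\<^sup>2)"
proof -
  have "2 * (x\<^sup>2 + y\<^sup>2) - (x + y)\<^sup>2 = (x - y)\<^sup>2"
    by (simp add: power2_eq_square algebra_simps)
  then show ?thesis by (metis diff_ge_0_iff_ge zero_le_power2)
qed

lemma norm_harmonic_sq_le: "(cmod (harmonic \<omega> A B s x))\<^sup>2 \<le> 2 * ((cmod A)\<^sup>2 + (cmod B)\<^sup>2)"
proof -
  have "cmod (harmonic \<omega> A B s x)
      \<le> cmod A * \<bar>cos (\<omega> * (x - s))\<bar> + cmod B * \<bar>sin (\<omega> * (x - s))\<bar>"
    unfolding harmonic_def by (metis norm_mult norm_of_real norm_triangle_ineq)
  also have "\<dots> \<le> cmod A + cmod B"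
    by (intro add_mono mult_left_le) auto
  finally have "(cmod (harmonic \<omega> A B s x))\<^sup>2 \<le> (cmod A + cmod B)\<^sup>2"
    by (intro power_mono) auto
  also have "\<dots> \<le> 2 * ((cmod A)\<^sup>2 + (cmod B)\<^sup>2)"
    by (rule square_sum_le)
  finally show ?thesis .
qed

text \<open>The combinations h1 and h2 below are the coordinates of (f, f1) in the frame rotating with
  the free solutions; both have derivative zero.\<close>
lemma eq_harmonic_if_oscillator:
  fixes f f1 :: "real \<Rightarrow> complex"
  assumes \<omega>: "\<omega> \<noteq> 0" and x: "x \<in> {a..b}"
    and f: "\<And>y. y \<in> {a..b} \<Longrightarrow> (f has_vector_derivative f1 y) (at y within {a..b})"
    and f1: "\<And>y. y \<in> {a..b} \<Longrightarrow>
      (f1 has_vector_derivative - of_real (\<omega>\<^sup>2) * f y) (at y within {a..b})"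
  shows "f x = harmonic \<omega> (f a) (f1 a / of_real \<omega>) a x"
    and "f1 x = harmonic \<omega> (f1 a) (- of_real \<omega> * f a) a x"
proof -
  define W where "W = (of_real \<omega> :: complex)"
  define C where "C = harmonic \<omega> 1 0 a"
  define S where "S = harmonic \<omega> 0 1 a"
  have W: "W \<noteq> 0" "of_real (\<omega>\<^sup>2) = W * W" using \<omega> by (simp_all add: W_def power2_eq_square)
  have dC: "(C has_vector_derivative - W * S y) (at y within {a..b})" for y
    using harmonic_has_vector_derivative[of \<omega> 1 0 a y]
    by (simp add: C_def S_def W_def harmonic_def)
  have dS: "(S has_vector_derivative W * C y) (at y within {a..b})" for y
    using harmonic_has_vector_derivative[of \<omega> 0 1 a y]
    by (simp add: C_def S_def W_def harmonic_def)
  define h1 where "h1 y = f y * C y - f1 y * S y / W" for y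
  define h2 where "h2 y = W * f y * S y + f1 y * C y" for y
  have "(h1 has_vector_derivative 0) (at y within {a..b})" if y: "y \<in> {a..b}" for y
  proof -
    have "(h1 has_vector_derivative
        (f y * (- W * S y) + f1 y * C y) - (f1 y * (W * C y) + (- of_real (\<omega>\<^sup>2) * f y) * S y) / W)
        (at y within {a..b})"
      unfolding h1_def[abs_def] by (intro derivative_intros f[OF y] f1[OF y] dC dS)
    then show ?thesis using W by (simp add: field_simps)
  qed
  then obtain c1 where c1: "\<And>y. y \<in> {a..b} \<Longrightarrow> h1 y = c1"
    using has_vector_derivative_zero_constant[of "{a..b}" h1] by blast
  have "(h2 has_vector_derivative 0) (at y within {a..b})" if y: "y \<in> {a..b}" for y
  proof -
    have "(h2 has_vector_derivative
        (W * f y * (W * C y) + W * f1 y * S y) + (f1 y * (- W * S y) + (- of_real (\<omega>\<^sup>2) * f y) * C y))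
        (at y within {a..b})"
      unfolding h2_def[abs_def] by (intro derivative_intros f[OF y] f1[OF y] dC dS)
    then show ?thesis using W by (simp add: algebra_simps)
  qed
  then obtain c2 where c2: "\<And>y. y \<in> {a..b} \<Longrightarrow> h2 y = c2"
    using has_vector_derivative_zero_constant[of "{a..b}" h2] by blast
  have a: "a \<in> {a..b}" using x by auto
  have h: "h1 x = f a" "h2 x = f1 a"
    using c1[OF x] c1[OF a] c2[OF x] c2[OF a] by (simp_all add: h1_def h2_def C_def S_def)
  have CS: "C x ^ 2 + S x ^ 2 = 1"
    unfolding C_def S_def harmonic_def by (simp flip: of_real_power of_real_add)
  have "f x * (C x ^ 2 + S x ^ 2) = h1 x * C x + h2 x * S x / W"
    using W unfolding h1_def h2_def by (simp add: field_simps power2_eq_square)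
  then show "f x = harmonic \<omega> (f a) (f1 a / of_real \<omega>) a x"
    using CS h by (simp add: C_def S_def W_def harmonic_def)
  have "f1 x * (C x ^ 2 + S x ^ 2) = - W * h1 x * S x + h2 x * C x"
    using W unfolding h1_def h2_def by (simp add: field_simps power2_eq_square)
  then show "f1 x = harmonic \<omega> (f1 a) (- of_real \<omega> * f a) a x"
    using CS h by (simp add: C_def S_def W_def harmonic_def)
qed

lemma H2_rep_harmonic:
  "H2_rep a b (harmonic \<omega> A B s) (harmonic \<omega> (of_real \<omega> * B) (- of_real \<omega> * A) s)
     (\<lambda>x. - of_real (\<omega>\<^sup>2) * harmonic \<omega> A B s x)"
proof (rule H2_rep_if_derivatives)
  show "continuous_on {a..b} (\<lambda>x. - of_real (\<omega>\<^sup>2) * harmonic \<omega> A B s x)"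
    by (intro continuous_intros continuous_on_harmonic)
  show "(harmonic \<omega> A B s has_vector_derivative harmonic \<omega> (of_real \<omega> * B) (- of_real \<omega> * A) s x)
      (at x within {a..b})" for x
    by (rule harmonic_has_vector_derivative)
  show "(harmonic \<omega> (of_real \<omega> * B) (- of_real \<omega> * A) s has_vector_derivative
      - of_real (\<omega>\<^sup>2) * harmonic \<omega> A B s x) (at x within {a..b})" for x
    using harmonic_has_vector_derivative[of \<omega> "of_real \<omega> * B" "- of_real \<omega> * A" s x]
    by (simp only: harmonic_derivative_derivative)
qed

lemma H2_edge_harmonic: "H2_edge a b (harmonic \<omega> A B s)"
  using H2_rep_harmonic unfolding H2_edge_def by blast

lemma d1_harmonic:
  "a < b \<Longrightarrow> x \<in> {a..b} \<Longrightarrow>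
    d1 a b (harmonic \<omega> A B s) x = harmonic \<omega> (of_real \<omega> * B) (- of_real \<omega> * A) s x"
  by (rule d1_eq_if_H2_rep[OF H2_rep_harmonic])

lemma edge_eig_harmonic:
  assumes "a < b"
  shows "edge_eig (\<omega>\<^sup>2) a b (harmonic \<omega> A B s)"
  unfolding edge_eig_def
  using d2_AE_eq_if_H2_rep[OF H2_rep_harmonic[of a b \<omega> A B s] assms] by (rule eventually_mono) auto

lemma H2_sqnorm_harmonic_le:
  assumes "a < b"
  shows "H2_sqnorm a b (harmonic \<omega> A B s)
    \<le> (b - a) * (2 * (1 + \<omega>\<^sup>2 + \<omega> ^ 4) * ((cmod A)\<^sup>2 + (cmod B)\<^sup>2))"
proof (rule H2_sqnorm_le[OF H2_rep_harmonic assms])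
  fix x
  define N where "N = (cmod A)\<^sup>2 + (cmod B)\<^sup>2"
  have f: "(cmod (harmonic \<omega> A B s x))\<^sup>2 \<le> 2 * N"
    unfolding N_def by (rule norm_harmonic_sq_le)
  have f1: "(cmod (harmonic \<omega> (of_real \<omega> * B) (- of_real \<omega> * A) s x))\<^sup>2 \<le> \<omega>\<^sup>2 * (2 * N)"
    using norm_harmonic_sq_le[of \<omega> "of_real \<omega> * B" "- of_real \<omega> * A" s x]
    by (simp add: N_def norm_mult power_mult_distrib algebra_simps)
  have "cmod (- of_real (\<omega>\<^sup>2) * harmonic \<omega> A B s x) = \<omega>\<^sup>2 * cmod (harmonic \<omega> A B s x)"
    unfolding norm_mult norm_minus_cancel norm_of_real by simp
  then have "(cmod (- of_real (\<omega>\<^sup>2) * harmonic \<omega> A B s x))\<^sup>2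
      = \<omega> ^ 4 * (cmod (harmonic \<omega> A B s x))\<^sup>2"
    by (simp add: power_mult_distrib flip: power_mult)
  also have "\<dots> \<le> \<omega> ^ 4 * (2 * N)"
    using f by (rule mult_left_mono) simp
  finally show "(cmod (harmonic \<omega> A B s x))\<^sup>2
      + (cmod (harmonic \<omega> (of_real \<omega> * B) (- of_real \<omega> * A) s x))\<^sup>2
      + (cmod (- of_real (\<omega>\<^sup>2) * harmonic \<omega> A B s x))\<^sup>2
      \<le> 2 * (1 + \<omega>\<^sup>2 + \<omega> ^ 4) * N"
    using f f1 by (simp add: algebra_simps)
qed

lemma H2_rep_eigen_has_vector_derivative:
  fixes f f1 f2 :: "real \<Rightarrow> complex"
  assumes H: "H2_rep a b f f1 f2"
    and eig: "AE x in lborel. x \<in> {a..b} \<longrightarrow> - f2 x = of_real (\<omega>\<^sup>2) * f x"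
    and y: "y \<in> {a..b}"
  shows "(f1 has_vector_derivative - of_real (\<omega>\<^sup>2) * f y) (at y within {a..b})"
proof -
  define g where "g x = - of_real (\<omega>\<^sup>2) * f x" for x
  have g: "continuous_on {a..b} g"
    unfolding g_def by (intro continuous_intros continuous_on_H2_rep[OF H])
  have f2: "set_integrable lborel {a..b} f2"
    and f1_eq: "\<And>x. x \<in> {a..b} \<Longrightarrow> f1 x = f1 a + set_lebesgue_integral lborel {a..x} f2"
    using H unfolding H2_rep_def by blast+
  have f1_integral: "f1 x = integral {a..x} g + f1 a" if x: "x \<in> {a..b}" for x
  proof -
    have "set_lebesgue_integral lborel {a..x} f2 = set_lebesgue_integral lborel {a..x} g"
    proof (rule set_integral_cong_AE_if_set_integrable)
      show "set_integrable lborel {a..x} f2" "set_integrable lborel {a..x} g"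
        using x f2 borel_integrable_atLeastAtMost'[OF g] by (auto intro: set_integrable_subset)
      show "AE t in lborel. t \<in> {a..x} \<longrightarrow> f2 t = g t"
        using eig
      proof (rule eventually_mono, intro impI)
        fix t assume "t \<in> {a..b} \<longrightarrow> - f2 t = of_real (\<omega>\<^sup>2) * f t" "t \<in> {a..x}"
        then have "- f2 t = of_real (\<omega>\<^sup>2) * f t" using x by auto
        then show "f2 t = g t" unfolding g_def mult_minus_left by (rule equation_minus_iff[THEN iffD2, OF sym])
      qed
    qed
    then show ?thesis
      using f1_eq[OF x] set_integral_Icc_eq_integral[OF borel_integrable_atLeastAtMost'[OF g] x]
      by simp
  qed
  have "((\<lambda>x. integral {a..x} g + f1 a) has_vector_derivative - of_real (\<omega>\<^sup>2) * f y)
      (at y within {a..b})"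
    unfolding has_vector_derivative_add_const
    using integral_has_vector_derivative[OF g y] by (simp only: g_def)
  with y f1_integral show ?thesis by (rule has_vector_derivative_transform)
qed

lemma eigen_edge_eq_harmonic:
  assumes E: "H2_edge a b f" and eig: "edge_eig (\<omega>\<^sup>2) a b f" and \<omega>: "\<omega> \<noteq> 0"
    and x: "x \<in> {a..b}"
  shows "f x = harmonic \<omega> (f a) (d1 a b f a / of_real \<omega>) a x"
    and "d1 a b f x = harmonic \<omega> (d1 a b f a) (- of_real \<omega> * f a) a x"
proof -
  note H = H2_rep_d1_d2[OF E]
  have "AE x in lborel. x \<in> {a..b} \<longrightarrow> - d2 a b f x = of_real (\<omega>\<^sup>2) * f x"
    using eig unfolding edge_eig_def .
  note ode = eq_harmonic_if_oscillator[OF \<omega> x H2_rep_has_vector_derivative[OF H]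
      H2_rep_eigen_has_vector_derivative[OF H this]]
  show "f x = harmonic \<omega> (f a) (d1 a b f a / of_real \<omega>) a x" using ode(1) by simp
  show "d1 a b f x = harmonic \<omega> (d1 a b f a) (- of_real \<omega> * f a) a x" using ode(2) by simp
qed

lemma eigen_edge_endpoint_derivs:
  assumes E: "H2_edge a b f" and eig: "edge_eig (\<omega>\<^sup>2) a b f" and \<omega>: "\<omega> \<noteq> 0"
    and L: "b - a = L" "0 \<le> L" and sin: "sin (\<omega> * L) \<noteq> 0"
  shows "d1 a b f a = of_real \<omega> * (f b - f a * of_real (cos (\<omega> * L))) / of_real (sin (\<omega> * L))"
    and "d1 a b f b = of_real \<omega> * (f b * of_real (cos (\<omega> * L)) - f a) / of_real (sin (\<omega> * L))"
proof -
  define C where "C = (of_real (cos (\<omega> * L)) :: complex)"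
  define S where "S = (of_real (sin (\<omega> * L)) :: complex)"
  define W where "W = (of_real \<omega> :: complex)"
  have nz: "W \<noteq> 0" "S \<noteq> 0" using \<omega> sin by (simp_all add: W_def S_def)
  have CS: "C\<^sup>2 + S\<^sup>2 = 1" unfolding C_def S_def by (simp flip: of_real_power of_real_add)
  have b: "b \<in> {a..b}" using L by simp
  have fb: "f b = f a * C + d1 a b f a / W * S"
    using eigen_edge_eq_harmonic(1)[OF E eig \<omega> b] L by (simp add: harmonic_def C_def S_def W_def)
  have d1b: "d1 a b f b = d1 a b f a * C - W * f a * S"
    using eigen_edge_eq_harmonic(2)[OF E eig \<omega> b] L by (simp add: harmonic_def C_def S_def W_def)
  have d1a: "d1 a b f a = W * (f b - f a * C) / S"
    using nz unfolding fb by (simp add: field_simps)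
  then show "d1 a b f a = of_real \<omega> * (f b - f a * of_real (cos (\<omega> * L))) / of_real (sin (\<omega> * L))"
    by (simp add: W_def C_def S_def)
  have "d1 a b f b = W * (f b * C - f a * (C\<^sup>2 + S\<^sup>2)) / S"
    using nz unfolding d1b d1a by (simp add: field_simps power2_eq_square)
  then show "d1 a b f b = of_real \<omega> * (f b * of_real (cos (\<omega> * L)) - f a) / of_real (sin (\<omega> * L))"
    unfolding CS by (simp add: W_def C_def S_def)
qed

lemma norm_rotation_sq:
  fixes z w :: complex and C S :: real
  assumes "C\<^sup>2 + S\<^sup>2 = 1"
  shows "(cmod (z * of_real C + w * of_real S))\<^sup>2 + (cmod (- z * of_real S + w * of_real C))\<^sup>2
    = (cmod z)\<^sup>2 + (cmod w)\<^sup>2"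
proof -
  have "(cmod (z * of_real C + w * of_real S))\<^sup>2 + (cmod (- z * of_real S + w * of_real C))\<^sup>2
     = ((Re z)\<^sup>2 + (Re w)\<^sup>2 + (Im z)\<^sup>2 + (Im w)\<^sup>2) * (C\<^sup>2 + S\<^sup>2)"
    unfolding cmod_power2 by (simp add: power2_eq_square algebra_simps)
  then show ?thesis using assms unfolding cmod_power2 by simp
qed

text \<open>The value and the scaled derivative of an eigenfunction rotate rigidly along the edge, so
  the H^2 density never drops below min 1 \<omega>^2 times the squared value at the left end.\<close>
lemma H2_sqnorm_eigen_edge_ge:
  assumes E: "H2_edge a b f" and eig: "edge_eig (\<omega>\<^sup>2) a b f" and \<omega>: "\<omega> \<noteq> 0" and ab: "a < b"
  shows "(b - a) * (min 1 (\<omega>\<^sup>2) * (cmod (f a))\<^sup>2) \<le> H2_sqnorm a b f"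
proof (rule H2_sqnorm_ge[OF H2_rep_d1_d2[OF E] ab])
  fix x assume x: "x \<in> {a..b}"
  define C S where "C = cos (\<omega> * (x - a))" and "S = sin (\<omega> * (x - a))"
  define Q where "Q = d1 a b f a / of_real \<omega>"
  define p q where "p = (cmod (f a * of_real C + Q * of_real S))\<^sup>2"
    and "q = (cmod (- f a * of_real S + Q * of_real C))\<^sup>2"
  have "f x = f a * of_real C + Q * of_real S"
    using eigen_edge_eq_harmonic(1)[OF E eig \<omega> x] by (simp add: harmonic_def C_def S_def Q_def)
  moreover have "d1 a b f a = of_real \<omega> * Q" using \<omega> by (simp add: Q_def)
  then have "d1 a b f x = of_real \<omega> * (- f a * of_real S + Q * of_real C)"
    using eigen_edge_eq_harmonic(2)[OF E eig \<omega> x]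
    by (simp add: harmonic_def C_def S_def algebra_simps)
  ultimately have density: "(cmod (f x))\<^sup>2 + (cmod (d1 a b f x))\<^sup>2 = p + \<omega>\<^sup>2 * q"
    unfolding p_def q_def by (simp add: norm_mult power_mult_distrib)
  have pq: "p + q = (cmod (f a))\<^sup>2 + (cmod Q)\<^sup>2"
    unfolding p_def q_def by (rule norm_rotation_sq) (simp add: C_def S_def)
  have "min 1 (\<omega>\<^sup>2) * p \<le> 1 * p" "min 1 (\<omega>\<^sup>2) * q \<le> \<omega>\<^sup>2 * q"
    unfolding p_def q_def by (intro mult_right_mono; simp)+
  moreover have "min 1 (\<omega>\<^sup>2) * (cmod (f a))\<^sup>2 \<le> min 1 (\<omega>\<^sup>2) * (p + q)"
    using pq by (intro mult_left_mono) auto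
  ultimately show "min 1 (\<omega>\<^sup>2) * (cmod (f a))\<^sup>2 \<le> (cmod (f x))\<^sup>2 + (cmod (d1 a b f x))\<^sup>2"
    unfolding density by (simp add: distrib_left)
qed

section \<open>The decorating loop\<close>

text \<open>In the application c is the vertex value, y = m (-a3/2), E = e^{-i\<beta>} and cb = cos \<beta>;
  the last hypothesis is the quasi-periodic matching of derivatives, which forces
  y = c (1 + E) / (2 E C).\<close>
lemma loop_flux_algebra:
  fixes c y W E :: complex and C S cb :: real
  assumes W: "W \<noteq> 0" and S: "S \<noteq> 0" and C: "C \<noteq> 0" and CS: "C\<^sup>2 + S\<^sup>2 = 1"
    and E: "E * E + 1 = 2 * of_real cb * E"
    and der: "W * (E * y * of_real C - c) / of_real S = E * (W * (c - y * of_real C) / of_real S)"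
  shows "W * (E * y - c * of_real C) / of_real S - W * (c * of_real C - y) / of_real S
       = - 2 * W * of_real ((C\<^sup>2 - S\<^sup>2 - cb) / (2 * S * C)) * c"
proof -
  have CS': "(of_real C :: complex)\<^sup>2 + (of_real S)\<^sup>2 = 1"
    using CS by (metis of_real_1 of_real_add of_real_power)
  have "W * (E * y * of_real C - c) = W * (E * (c - y * of_real C))"
    using der S by (simp add: field_simps)
  then have "E * y * of_real C - c = E * (c - y * of_real C)"
    using W by simp
  then have "2 * E * (of_real C * (W * (E * y - c * of_real C) - W * (c * of_real C - y)))
      = 2 * E * (- W * ((of_real C)\<^sup>2 - (of_real S)\<^sup>2 - of_real cb) * c)"
    using E CS' by algebra
  moreover have "E \<noteq> 0" using E by auto
  ultimately have "of_real C * (W * (E * y - c * of_real C) - W * (c * of_real C - y))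
      = - W * ((of_real C)\<^sup>2 - (of_real S)\<^sup>2 - of_real cb) * c"
    by (simp only: mult_cancel_left) simp
  then have X: "W * (E * y - c * of_real C) - W * (c * of_real C - y)
      = - W * ((of_real C)\<^sup>2 - (of_real S)\<^sup>2 - of_real cb) * c / of_real C"
    using C by (intro eq_divide_imp) (simp_all add: mult.commute)
  have "W * (E * y - c * of_real C) / of_real S - W * (c * of_real C - y) / of_real S
      = (W * (E * y - c * of_real C) - W * (c * of_real C - y)) / of_real S"
    by (simp add: diff_divide_distrib)
  also have "\<dots> = - 2 * W * of_real ((C\<^sup>2 - S\<^sup>2 - cb) / (2 * S * C)) * c"
    unfolding X using S C by (simp add: field_simps)
  finally show ?thesis .
qed

lemma exp_minus_i_sq_add_1: "exp (- \<i> * of_real \<beta>) * exp (- \<i> * of_real \<beta>) + 1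
    = 2 * of_real (cos \<beta>) * exp (- \<i> * of_real \<beta>)"
proof -
  have "2 * of_real (cos \<beta>) = exp (\<i> * of_real \<beta>) + exp (- \<i> * of_real \<beta>)"
    using cos_exp_eq[of "of_real \<beta>"] by (simp add: cos_of_real field_simps)
  moreover have "exp (\<i> * of_real \<beta>) * exp (- \<i> * of_real \<beta>) = 1"
    by (simp flip: exp_add)
  ultimately show ?thesis by (simp add: algebra_simps)
qed

definition loop_coeff :: "real \<Rightarrow> real \<Rightarrow> real \<Rightarrow> real" where
  "loop_coeff a3 \<beta> \<omega> = (cos (\<omega> * a3) - cos \<beta>) / sin (\<omega> * a3)"

text \<open>Each half of the loop is an edge of length a3/2, and sin (\<omega> a3) \<noteq> 0 forces both
  sin and cos of \<omega> a3/2 to be nonzero.\<close>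
lemma loop_flux:
  fixes p m :: "real \<Rightarrow> complex"
  assumes Ep: "H2_edge 0 (a3/2) p" and eigp: "edge_eig (\<omega>\<^sup>2) 0 (a3/2) p"
    and Em: "H2_edge (-a3/2) 0 m" and eigm: "edge_eig (\<omega>\<^sup>2) (-a3/2) 0 m"
    and \<omega>: "\<omega> \<noteq> 0" and a3: "0 < a3" and sin: "sin (\<omega> * a3) \<noteq> 0"
    and val: "p (a3/2) = exp (- \<i> * of_real \<beta>) * m (-a3/2)"
    and der: "d1 0 (a3/2) p (a3/2) = exp (- \<i> * of_real \<beta>) * d1 (-a3/2) 0 m (-a3/2)"
    and cont: "m 0 = p 0"
  shows "d1 0 (a3/2) p 0 - d1 (-a3/2) 0 m 0
    = - 2 * of_real \<omega> * of_real (loop_coeff a3 \<beta> \<omega>) * p 0"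
proof -
  define C S where "C = cos (\<omega> * (a3/2))" and "S = sin (\<omega> * (a3/2))"
  define E where "E = exp (- \<i> * of_real \<beta>)"
  have double: "sin (\<omega> * a3) = 2 * S * C" "cos (\<omega> * a3) = C\<^sup>2 - S\<^sup>2"
    unfolding C_def S_def using sin_double[of "\<omega> * (a3/2)"] cos_double[of "\<omega> * (a3/2)"]
    by simp_all
  have nz: "S \<noteq> 0" "C \<noteq> 0" using sin double(1) by auto
  have L: "a3/2 - 0 = a3/2" "0 - - a3/2 = a3/2" "0 \<le> a3/2" using a3 by simp_all
  note dp = eigen_edge_endpoint_derivs[OF Ep eigp \<omega> L(1,3), folded C_def S_def, OF nz(1)]
  note dm = eigen_edge_endpoint_derivs[OF Em eigm \<omega> L(2,3), folded C_def S_def, OF nz(1)]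
  have "of_real \<omega> * (E * m (-a3/2) * of_real C - p 0) / of_real S
      = E * (of_real \<omega> * (p 0 - m (-a3/2) * of_real C) / of_real S)"
    using der unfolding dp(2) dm(1) val cont E_def .
  from loop_flux_algebra[OF _ nz(1) nz(2) _ exp_minus_i_sq_add_1[of \<beta>, folded E_def] this]
  have "of_real \<omega> * (E * m (-a3/2) - p 0 * of_real C) / of_real S
      - of_real \<omega> * (p 0 * of_real C - m (-a3/2)) / of_real S
      = - 2 * of_real \<omega> * of_real ((C\<^sup>2 - S\<^sup>2 - cos \<beta>) / (2 * S * C)) * p 0"
    using \<omega> by (simp add: C_def S_def)
  then show ?thesis
    unfolding dp(1) dm(2) val cont loop_coeff_def double E_def .
qed

section \<open>Vertex conditions\<close>

definition loop_conditions :: "real \<Rightarrow> real \<Rightarrow> gfun \<Rightarrow> bool" where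
  "loop_conditions a3 \<beta> u \<longleftrightarrow> (\<forall>k l.
     gp u k l (a3/2) = exp (- \<i> * of_real \<beta>) * gm u k l (-a3/2) \<and>
     d1 0 (a3/2) (gp u k l) (a3/2) = exp (- \<i> * of_real \<beta>) * d1 (-a3/2) 0 (gm u k l) (-a3/2))"

definition kirchhoff_flux :: "real \<Rightarrow> real \<Rightarrow> real \<Rightarrow> real \<Rightarrow> gfun \<Rightarrow> int \<Rightarrow> int \<Rightarrow> complex" where
  "kirchhoff_flux a1 a2 a3 \<mu> u k l =
     d1 (of_int k * a1) (of_int (k+1) * a1) (gh u k l) (of_int k * a1)
     - d1 (of_int (k-1) * a1) (of_int k * a1) (gh u (k-1) l) (of_int k * a1)
     + d1 (of_int l * a2) (of_int (l+1) * a2) (gv u k l) (of_int l * a2)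
     - d1 (of_int (l-1) * a2) (of_int l * a2) (gv u k (l-1)) (of_int l * a2)
     + of_real (wmu \<mu> k l) * (d1 0 (a3/2) (gp u k l) 0 - d1 (-a3/2) 0 (gm u k l) 0)"

lemma in_dom_iff:
  "in_dom a1 a2 a3 \<mu> \<beta> u \<longleftrightarrow>
    in_H2G a1 a2 a3 u \<and> loop_conditions a3 \<beta> u \<and> (\<forall>k l. kirchhoff_flux a1 a2 a3 \<mu> u k l = 0)"
  unfolding in_dom_def loop_conditions_def kirchhoff_flux_def by blast

definition vertex_residual ::
  "real \<Rightarrow> real \<Rightarrow> real \<Rightarrow> real \<Rightarrow> real \<Rightarrow> real \<Rightarrow> (int \<Rightarrow> int \<Rightarrow> complex) \<Rightarrow> int \<Rightarrow> int \<Rightarrow> complex"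
where
  "vertex_residual a1 a2 a3 \<mu> \<beta> \<omega> c k l =
     (c (k+1) l + c (k-1) l) / of_real (sin (\<omega> * a1))
     + (c k (l+1) + c k (l-1)) / of_real (sin (\<omega> * a2))
     - 2 * of_real (g_beta a1 a2 a3 \<beta> \<omega>) * c k l
     - 2 * of_real (wmu \<mu> k l - 1) * of_real (loop_coeff a3 \<beta> \<omega>) * c k l"

lemma disc_system_iff:
  "disc_system a1 a2 a3 \<mu> \<beta> \<omega> c \<longleftrightarrow> (\<forall>k l. vertex_residual a1 a2 a3 \<mu> \<beta> \<omega> c k l = 0)"
proof
  assume sys: "disc_system a1 a2 a3 \<mu> \<beta> \<omega> c"
  show "\<forall>k l. vertex_residual a1 a2 a3 \<mu> \<beta> \<omega> c k l = 0"
  proof (intro allI)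
    fix k l
    show "vertex_residual a1 a2 a3 \<mu> \<beta> \<omega> c k l = 0"
    proof (cases "(k, l) = (0, 0)")
      case True
      then have "k = 0" "l = 0" by simp_all
      then show ?thesis
        using sys unfolding disc_system_def vertex_residual_def loop_coeff_def by (simp add: wmu_def)
    next
      case False
      then have "wmu \<mu> k l = 1" by (auto simp: wmu_def)
      then show ?thesis
        using sys False unfolding disc_system_def vertex_residual_def by simp
    qed
  qed
next
  assume res: "\<forall>k l. vertex_residual a1 a2 a3 \<mu> \<beta> \<omega> c k l = 0"
  show "disc_system a1 a2 a3 \<mu> \<beta> \<omega> c"
    unfolding disc_system_def
  proof (intro conjI allI impI)
    fix k l :: int
    assume "(k, l) \<noteq> (0, 0)"
    then have "wmu \<mu> k l = 1" by (auto simp: wmu_def)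
    then show "(c (k+1) l + c (k-1) l) / of_real (sin (\<omega> * a1))
        + (c k (l+1) + c k (l-1)) / of_real (sin (\<omega> * a2))
        - 2 * of_real (g_beta a1 a2 a3 \<beta> \<omega>) * c k l = 0"
      using res unfolding vertex_residual_def by simp
  next
    show "(c 1 0 + c (-1) 0) / of_real (sin (\<omega> * a1))
        + (c 0 1 + c 0 (-1)) / of_real (sin (\<omega> * a2))
        - 2 * of_real (g_beta a1 a2 a3 \<beta> \<omega>) * c 0 0
      = 2 * of_real (\<mu> - 1) * of_real ((cos (\<omega> * a3) - cos \<beta>) / sin (\<omega> * a3)) * c 0 0"
      using res[rule_format, of 0 0] unfolding vertex_residual_def loop_coeff_def
      by (simp add: wmu_def)
  qed
qed

lemma in_H2G_edges:
  assumes "in_H2G a1 a2 a3 u"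
  shows "H2_edge (of_int k * a1) (of_int (k+1) * a1) (gh u k l)"
    and "H2_edge (of_int l * a2) (of_int (l+1) * a2) (gv u k l)"
    and "H2_edge 0 (a3/2) (gp u k l)" and "H2_edge (-a3/2) 0 (gm u k l)"
  using assms unfolding in_H2G_def by blast+

lemma in_H2G_vertex_values:
  assumes "in_H2G a1 a2 a3 u"
  shows "gh u k l (of_int k * a1) = vtx a1 u k l"
    and "gh u k l (of_int (k+1) * a1) = vtx a1 u (k+1) l"
    and "gv u k l (of_int l * a2) = vtx a1 u k l"
    and "gv u k l (of_int (l+1) * a2) = vtx a1 u k (l+1)"
    and "gp u k l 0 = vtx a1 u k l" and "gm u k l 0 = vtx a1 u k l"
proof -
  have cont: "\<And>k l. gh u (k-1) l (of_int k * a1) = vtx a1 u k l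
      \<and> gv u k l (of_int l * a2) = vtx a1 u k l \<and> gv u k (l-1) (of_int l * a2) = vtx a1 u k l
      \<and> gp u k l 0 = vtx a1 u k l \<and> gm u k l 0 = vtx a1 u k l"
    using assms unfolding in_H2G_def vtx_def by blast
  show "gh u k l (of_int k * a1) = vtx a1 u k l" by (simp add: vtx_def)
  show "gh u k l (of_int (k+1) * a1) = vtx a1 u (k+1) l" using cont[of "k+1" l] by simp
  show "gv u k l (of_int l * a2) = vtx a1 u k l" using cont[of k l] by simp
  show "gv u k l (of_int (l+1) * a2) = vtx a1 u k (l+1)" using cont[of k "l+1"] by simp
  show "gp u k l 0 = vtx a1 u k l" "gm u k l 0 = vtx a1 u k l" using cont[of k l] by simp_all
qed

lemma is_eig_eq_edges:
  assumes "is_eig_eq a1 a2 a3 lam u"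
  shows "edge_eig lam (of_int k * a1) (of_int (k+1) * a1) (gh u k l)"
    and "edge_eig lam (of_int l * a2) (of_int (l+1) * a2) (gv u k l)"
    and "edge_eig lam 0 (a3/2) (gp u k l)" and "edge_eig lam (-a3/2) 0 (gm u k l)"
  using assms unfolding is_eig_eq_def by blast+

section \<open>Extension of vertex values\<close>

definition edge_coeff :: "real \<Rightarrow> real \<Rightarrow> complex \<Rightarrow> complex \<Rightarrow> complex" where
  "edge_coeff \<omega> L c0 c1 = (c1 - c0 * of_real (cos (\<omega> * L))) / of_real (sin (\<omega> * L))"

lemma harmonic_edge_coeff_end:
  "b - s = L \<Longrightarrow> sin (\<omega> * L) \<noteq> 0 \<Longrightarrow> harmonic \<omega> c0 (edge_coeff \<omega> L c0 c1) s b = c1"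
  by (simp add: harmonic_def edge_coeff_def)

lemma edge_coeff_scale: "edge_coeff \<omega> L (z * c0) (z * c1) = z * edge_coeff \<omega> L c0 c1"
  by (simp add: edge_coeff_def algebra_simps)

lemma norm_sq_add_edge_coeff_le:
  assumes sin: "sin (\<omega> * L) \<noteq> 0"
  shows "(cmod c0)\<^sup>2 + (cmod (edge_coeff \<omega> L c0 c1))\<^sup>2
    \<le> (1 + 2 / (sin (\<omega> * L))\<^sup>2) * ((cmod c0)\<^sup>2 + (cmod c1)\<^sup>2)"
proof -
  define N where "N = (cmod c0)\<^sup>2 + (cmod c1)\<^sup>2"
  have "cmod (c1 - c0 * of_real (cos (\<omega> * L))) \<le> cmod c1 + cmod c0 * \<bar>cos (\<omega> * L)\<bar>"
    by (metis norm_mult norm_of_real norm_triangle_ineq4)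
  also have "\<dots> \<le> cmod c0 + cmod c1"
    by (simp add: mult_left_le)
  finally have "(cmod (c1 - c0 * of_real (cos (\<omega> * L))))\<^sup>2 \<le> (cmod c0 + cmod c1)\<^sup>2"
    by (intro power_mono) auto
  also have "\<dots> \<le> 2 * N"
    unfolding N_def by (rule square_sum_le)
  finally have "(cmod (edge_coeff \<omega> L c0 c1))\<^sup>2 \<le> 2 * N / (sin (\<omega> * L))\<^sup>2"
    unfolding edge_coeff_def by (simp add: norm_divide power_divide divide_right_mono)
  moreover have "(cmod c0)\<^sup>2 \<le> N" unfolding N_def by simp
  ultimately show ?thesis
    unfolding N_def[symmetric] by (simp add: distrib_right)
qed

lemma H2_sqnorm_harmonic_edge_coeff_le:
  assumes ab: "a < b" and sin: "sin (\<omega> * L) \<noteq> 0"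
  shows "H2_sqnorm a b (harmonic \<omega> c0 (edge_coeff \<omega> L c0 c1) s)
    \<le> (b - a) * (2 * (1 + \<omega>\<^sup>2 + \<omega> ^ 4)) * (1 + 2 / (sin (\<omega> * L))\<^sup>2) * ((cmod c0)\<^sup>2 + (cmod c1)\<^sup>2)"
proof -
  have "H2_sqnorm a b (harmonic \<omega> c0 (edge_coeff \<omega> L c0 c1) s)
      \<le> (b - a) * (2 * (1 + \<omega>\<^sup>2 + \<omega> ^ 4)) * ((cmod c0)\<^sup>2 + (cmod (edge_coeff \<omega> L c0 c1))\<^sup>2)"
    using H2_sqnorm_harmonic_le[OF ab] by (simp add: mult.assoc)
  also have "\<dots> \<le> (b - a) * (2 * (1 + \<omega>\<^sup>2 + \<omega> ^ 4))
      * ((1 + 2 / (sin (\<omega> * L))\<^sup>2) * ((cmod c0)\<^sup>2 + (cmod c1)\<^sup>2))"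
    using ab by (intro mult_left_mono norm_sq_add_edge_coeff_le[OF sin]) auto
  finally show ?thesis by (simp add: mult.assoc)
qed

text \<open>The loop solution gp runs on [0, a3] from c to e^{-i\<beta>} c,
  and gm is its quasi-periodic translate x \<mapsto> e^{i\<beta>} gp (x + a3), which makes the loop
  conditions automatic.\<close>
definition eigen_extension ::
  "real \<Rightarrow> real \<Rightarrow> real \<Rightarrow> real \<Rightarrow> real \<Rightarrow> (int \<Rightarrow> int \<Rightarrow> complex) \<Rightarrow> gfun" where
  "eigen_extension a1 a2 a3 \<beta> \<omega> c =
     \<lparr>gh = \<lambda>k l. harmonic \<omega> (c k l) (edge_coeff \<omega> a1 (c k l) (c (k+1) l)) (of_int k * a1),
      gv = \<lambda>k l. harmonic \<omega> (c k l) (edge_coeff \<omega> a2 (c k l) (c k (l+1))) (of_int l * a2),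
      gp = \<lambda>k l. harmonic \<omega> (c k l) (edge_coeff \<omega> a3 (c k l) (exp (- \<i> * of_real \<beta>) * c k l)) 0,
      gm = \<lambda>k l. harmonic \<omega> (exp (\<i> * of_real \<beta>) * c k l)
        (edge_coeff \<omega> a3 (exp (\<i> * of_real \<beta>) * c k l) (c k l)) (- a3)\<rparr>"

lemma in_l2_shifts:
  assumes "in_l2 c"
  shows "(\<lambda>(k, l). (cmod (c (k+1) l))\<^sup>2) summable_on UNIV"
    and "(\<lambda>(k, l). (cmod (c k (l+1)))\<^sup>2) summable_on UNIV"
proof -
  have "(\<lambda>(k, l). (cmod (c (k+1) l))\<^sup>2) summable_on UNIV
      \<longleftrightarrow> (\<lambda>(k, l). (cmod (c k l))\<^sup>2) summable_on UNIV"
    by (rule summable_on_reindex_bij_witness[of UNIV "\<lambda>(k, l). (k - 1, l)" "\<lambda>(k, l). (k + 1, l)"])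
      auto
  moreover have "(\<lambda>(k, l). (cmod (c k (l+1)))\<^sup>2) summable_on UNIV
      \<longleftrightarrow> (\<lambda>(k, l). (cmod (c k l))\<^sup>2) summable_on UNIV"
    by (rule summable_on_reindex_bij_witness[of UNIV "\<lambda>(k, l). (k, l - 1)" "\<lambda>(k, l). (k, l + 1)"])
      auto
  ultimately show "(\<lambda>(k, l). (cmod (c (k+1) l))\<^sup>2) summable_on UNIV"
    "(\<lambda>(k, l). (cmod (c k (l+1)))\<^sup>2) summable_on UNIV"
    using assms unfolding in_l2_def by blast+
qed

lemma eigen_extension_simps:
  "gh (eigen_extension a1 a2 a3 \<beta> \<omega> c) k l
    = harmonic \<omega> (c k l) (edge_coeff \<omega> a1 (c k l) (c (k+1) l)) (of_int k * a1)"
  "gv (eigen_extension a1 a2 a3 \<beta> \<omega> c) k l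
    = harmonic \<omega> (c k l) (edge_coeff \<omega> a2 (c k l) (c k (l+1))) (of_int l * a2)"
  "gp (eigen_extension a1 a2 a3 \<beta> \<omega> c) k l
    = harmonic \<omega> (c k l) (edge_coeff \<omega> a3 (c k l) (exp (- \<i> * of_real \<beta>) * c k l)) 0"
  "gm (eigen_extension a1 a2 a3 \<beta> \<omega> c) k l
    = harmonic \<omega> (exp (\<i> * of_real \<beta>) * c k l)
        (edge_coeff \<omega> a3 (exp (\<i> * of_real \<beta>) * c k l) (c k l)) (- a3)"
  by (simp_all add: eigen_extension_def)

lemma vtx_eigen_extension: "vtx a1 (eigen_extension a1 a2 a3 \<beta> \<omega> c) = c"
  by (simp add: vtx_def eigen_extension_simps fun_eq_iff)

section \<open>The spectral correspondence\<close>

lemma sin_mult_nonzero: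
  assumes a: "0 < a" and nonres: "\<forall>n::int. \<omega> \<noteq> pi * of_int n / a"
  shows "sin (\<omega> * a) \<noteq> 0"
proof
  assume "sin (\<omega> * a) = 0"
  then obtain n :: int where "\<omega> * a = of_int n * pi" by (auto simp: sin_zero_iff_int2)
  then have "\<omega> = pi * of_int n / a" using a by (simp add: field_simps)
  with nonres show False by blast
qed

locale nonresonant =
  fixes a1 a2 a3 \<omega> :: real
  assumes a1_pos: "0 < a1" and a2_pos: "0 < a2" and a3_pos: "0 < a3" and \<omega>_pos: "0 < \<omega>"
    and sin_a1: "sin (\<omega> * a1) \<noteq> 0" and sin_a2: "sin (\<omega> * a2) \<noteq> 0"
    and sin_a3: "sin (\<omega> * a3) \<noteq> 0"
begin

lemma \<omega>_nonzero: "\<omega> \<noteq> 0"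
  using \<omega>_pos by simp

lemma horizontal_edge_derivs:
  assumes H: "in_H2G a1 a2 a3 u" and eig: "is_eig_eq a1 a2 a3 (\<omega>\<^sup>2) u"
  shows "d1 (of_int k * a1) (of_int (k+1) * a1) (gh u k l) (of_int k * a1)
      = of_real \<omega> * (vtx a1 u (k+1) l - vtx a1 u k l * of_real (cos (\<omega> * a1)))
        / of_real (sin (\<omega> * a1))"
    and "d1 (of_int k * a1) (of_int (k+1) * a1) (gh u k l) (of_int (k+1) * a1)
      = of_real \<omega> * (vtx a1 u (k+1) l * of_real (cos (\<omega> * a1)) - vtx a1 u k l)
        / of_real (sin (\<omega> * a1))"
proof -
  have "of_int (k+1) * a1 - of_int k * a1 = a1" "0 \<le> a1"
    using a1_pos by (simp_all add: algebra_simps)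
  note derivs = eigen_edge_endpoint_derivs[OF in_H2G_edges(1)[OF H] is_eig_eq_edges(1)[OF eig]
      \<omega>_nonzero this sin_a1, unfolded in_H2G_vertex_values[OF H]]
  show "d1 (of_int k * a1) (of_int (k+1) * a1) (gh u k l) (of_int k * a1)
      = of_real \<omega> * (vtx a1 u (k+1) l - vtx a1 u k l * of_real (cos (\<omega> * a1)))
        / of_real (sin (\<omega> * a1))"
    by (rule derivs(1))
  show "d1 (of_int k * a1) (of_int (k+1) * a1) (gh u k l) (of_int (k+1) * a1)
      = of_real \<omega> * (vtx a1 u (k+1) l * of_real (cos (\<omega> * a1)) - vtx a1 u k l)
        / of_real (sin (\<omega> * a1))"
    by (rule derivs(2))
qed

lemma vertical_edge_derivs:
  assumes H: "in_H2G a1 a2 a3 u" and eig: "is_eig_eq a1 a2 a3 (\<omega>\<^sup>2) u"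
  shows "d1 (of_int l * a2) (of_int (l+1) * a2) (gv u k l) (of_int l * a2)
      = of_real \<omega> * (vtx a1 u k (l+1) - vtx a1 u k l * of_real (cos (\<omega> * a2)))
        / of_real (sin (\<omega> * a2))"
    and "d1 (of_int l * a2) (of_int (l+1) * a2) (gv u k l) (of_int (l+1) * a2)
      = of_real \<omega> * (vtx a1 u k (l+1) * of_real (cos (\<omega> * a2)) - vtx a1 u k l)
        / of_real (sin (\<omega> * a2))"
proof -
  have "of_int (l+1) * a2 - of_int l * a2 = a2" "0 \<le> a2"
    using a2_pos by (simp_all add: algebra_simps)
  note derivs = eigen_edge_endpoint_derivs[OF in_H2G_edges(2)[OF H] is_eig_eq_edges(2)[OF eig]
      \<omega>_nonzero this sin_a2, unfolded in_H2G_vertex_values[OF H]]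
  show "d1 (of_int l * a2) (of_int (l+1) * a2) (gv u k l) (of_int l * a2)
      = of_real \<omega> * (vtx a1 u k (l+1) - vtx a1 u k l * of_real (cos (\<omega> * a2)))
        / of_real (sin (\<omega> * a2))"
    by (rule derivs(1))
  show "d1 (of_int l * a2) (of_int (l+1) * a2) (gv u k l) (of_int (l+1) * a2)
      = of_real \<omega> * (vtx a1 u k (l+1) * of_real (cos (\<omega> * a2)) - vtx a1 u k l)
        / of_real (sin (\<omega> * a2))"
    by (rule derivs(2))
qed

lemma kirchhoff_flux_eq:
  assumes H: "in_H2G a1 a2 a3 u" and eig: "is_eig_eq a1 a2 a3 (\<omega>\<^sup>2) u"
    and loop: "loop_conditions a3 \<beta> u"
  shows "kirchhoff_flux a1 a2 a3 \<mu> u k l = of_real \<omega> * vertex_residual a1 a2 a3 \<mu> \<beta> \<omega> (vtx a1 u) k l"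
proof -
  define c where "c = vtx a1 u"
  have jump: "d1 0 (a3/2) (gp u k l) 0 - d1 (-a3/2) 0 (gm u k l) 0
      = - 2 * of_real \<omega> * of_real (loop_coeff a3 \<beta> \<omega>) * c k l"
    using loop_flux[OF in_H2G_edges(3)[OF H] is_eig_eq_edges(3)[OF eig] in_H2G_edges(4)[OF H]
        is_eig_eq_edges(4)[OF eig] \<omega>_nonzero a3_pos sin_a3]
      loop in_H2G_vertex_values(5,6)[OF H]
    unfolding loop_conditions_def c_def by simp
  have left: "d1 (of_int (k-1) * a1) (of_int k * a1) (gh u (k-1) l) (of_int k * a1)
      = of_real \<omega> * (c k l * of_real (cos (\<omega> * a1)) - c (k-1) l) / of_real (sin (\<omega> * a1))"
    using horizontal_edge_derivs(2)[OF H eig, of "k-1" l] by (simp add: c_def)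
  have down: "d1 (of_int (l-1) * a2) (of_int l * a2) (gv u k (l-1)) (of_int l * a2)
      = of_real \<omega> * (c k l * of_real (cos (\<omega> * a2)) - c k (l-1)) / of_real (sin (\<omega> * a2))"
    using vertical_edge_derivs(2)[OF H eig, of "l-1" k] by (simp add: c_def)
  have g_beta: "g_beta a1 a2 a3 \<beta> \<omega> = cos (\<omega> * a1) / sin (\<omega> * a1) + cos (\<omega> * a2) / sin (\<omega> * a2)
      + loop_coeff a3 \<beta> \<omega>"
    by (simp add: g_beta_def loop_coeff_def tan_def)
  show ?thesis
    using sin_a1 sin_a2 \<omega>_nonzero
    unfolding kirchhoff_flux_def vertex_residual_def jump left down g_beta
      horizontal_edge_derivs(1)[OF H eig] vertical_edge_derivs(1)[OF H eig] c_def[symmetric]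
    by (simp add: field_simps)
qed

lemma in_l2_vtx:
  assumes H: "in_H2G a1 a2 a3 u" and eig: "is_eig_eq a1 a2 a3 (\<omega>\<^sup>2) u"
  shows "in_l2 (vtx a1 u)"
  unfolding in_l2_def
proof (rule summable_on_comparison_test)
  define m where "m = a3/2 * min 1 (\<omega>\<^sup>2)"
  have m: "0 < m" using a3_pos \<omega>_nonzero by (simp add: m_def)
  define T where "T = (\<lambda>(k, l). H2_sqnorm 0 (a3/2) (gp u k l) + H2_sqnorm (-a3/2) 0 (gm u k l)
     + H2_sqnorm (of_int k * a1) (of_int (k+1) * a1) (gh u k l)
     + H2_sqnorm (of_int l * a2) (of_int (l+1) * a2) (gv u k l))"
  show "(\<lambda>x. T x * (1 / m)) summable_on UNIV"
    using H unfolding in_H2G_def T_def by (intro summable_on_cmult_left) blast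
  fix x :: "int \<times> int"
  obtain k l where x: "x = (k, l)" by fastforce
  show "0 \<le> (case x of (k, l) \<Rightarrow> (cmod (vtx a1 u k l))\<^sup>2)" by (simp add: x)
  have "m * (cmod (vtx a1 u k l))\<^sup>2 \<le> H2_sqnorm 0 (a3/2) (gp u k l)"
    using H2_sqnorm_eigen_edge_ge[OF in_H2G_edges(3)[OF H] is_eig_eq_edges(3)[OF eig] \<omega>_nonzero]
      a3_pos in_H2G_vertex_values(5)[OF H]
    by (simp add: m_def mult.assoc)
  also have "\<dots> \<le> T x"
    by (simp add: x T_def H2_sqnorm_nonneg)
  finally show "(case x of (k, l) \<Rightarrow> (cmod (vtx a1 u k l))\<^sup>2) \<le> T x * (1 / m)"
    using m by (simp add: x field_simps)
qed

lemma eigenfunction_disc_system: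
  assumes dom: "in_dom a1 a2 a3 \<mu> \<beta> u" and eig: "is_eig_eq a1 a2 a3 (\<omega>\<^sup>2) u"
  shows "disc_system a1 a2 a3 \<mu> \<beta> \<omega> (vtx a1 u)"
proof -
  have H: "in_H2G a1 a2 a3 u" and loop: "loop_conditions a3 \<beta> u"
    and flux: "\<And>k l. kirchhoff_flux a1 a2 a3 \<mu> u k l = 0"
    using dom unfolding in_dom_iff by blast+
  have "vertex_residual a1 a2 a3 \<mu> \<beta> \<omega> (vtx a1 u) k l = 0" for k l
    using flux[of k l] \<omega>_nonzero unfolding kirchhoff_flux_eq[OF H eig loop] by simp
  then show ?thesis unfolding disc_system_iff by blast
qed

lemma is_eig_eq_eigen_extension: "is_eig_eq a1 a2 a3 (\<omega>\<^sup>2) (eigen_extension a1 a2 a3 \<beta> \<omega> c)"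
proof -
  have "of_int k * a1 < of_int (k+1) * a1" "of_int k * a2 < of_int (k+1) * a2" for k :: int
    using a1_pos a2_pos by (simp_all add: algebra_simps)
  moreover have "0 < a3/2" "- a3/2 < 0" using a3_pos by simp_all
  ultimately show ?thesis
    unfolding is_eig_eq_def eigen_extension_simps by (simp add: edge_eig_harmonic)
qed

lemma H2_sqnorm_eigen_extension_le:
  fixes c :: "int \<Rightarrow> int \<Rightarrow> complex" and \<beta> :: real
  defines "u \<equiv> eigen_extension a1 a2 a3 \<beta> \<omega> c"
    and "r \<equiv> \<lambda>L. 1 + 2 / (sin (\<omega> * L))\<^sup>2"
  shows "H2_sqnorm 0 (a3/2) (gp u k l) + H2_sqnorm (-a3/2) 0 (gm u k l)
      + H2_sqnorm (of_int k * a1) (of_int (k+1) * a1) (gh u k l)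
      + H2_sqnorm (of_int l * a2) (of_int (l+1) * a2) (gv u k l)
    \<le> 2 * (1 + \<omega>\<^sup>2 + \<omega> ^ 4) * (a1 * r a1 + a2 * r a2 + 2 * a3 * r a3)
      * ((cmod (c k l))\<^sup>2 + (cmod (c (k+1) l))\<^sup>2 + (cmod (c k (l+1)))\<^sup>2)"
proof -
  define K0 where "K0 = 2 * (1 + \<omega>\<^sup>2 + \<omega> ^ 4)"
  define N where "N = (cmod (c k l))\<^sup>2 + (cmod (c (k+1) l))\<^sup>2 + (cmod (c k (l+1)))\<^sup>2"
  have K0: "0 \<le> K0" and r: "0 \<le> r L" for L by (simp_all add: K0_def r_def add_nonneg_nonneg)
  have lt: "of_int k * a1 < of_int (k+1) * a1" "of_int l * a2 < of_int (l+1) * a2" "0 < a3/2" "- a3/2 < 0"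
    using a1_pos a2_pos a3_pos by (simp_all add: algebra_simps)
  have len: "of_int (k+1) * a1 - of_int k * a1 = a1" "of_int (l+1) * a2 - of_int l * a2 = a2"
    "a3/2 - 0 = a3/2" "0 - - a3/2 = a3/2"
    by (simp_all add: algebra_simps)
  have norm_exp: "cmod (exp (\<i> * of_real \<beta>) * z) = cmod z" "cmod (exp (- \<i> * of_real \<beta>) * z) = cmod z"
    for z :: complex
    by (simp_all add: norm_mult)
  note bound = H2_sqnorm_harmonic_edge_coeff_le
  have "H2_sqnorm (of_int k * a1) (of_int (k+1) * a1) (gh u k l)
      \<le> a1 * K0 * r a1 * ((cmod (c k l))\<^sup>2 + (cmod (c (k+1) l))\<^sup>2)"
    using bound[OF lt(1) sin_a1] unfolding u_def eigen_extension_simps len(1) K0_def r_def .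
  also have "\<dots> \<le> a1 * K0 * r a1 * N"
    using a1_pos K0 r by (intro mult_left_mono) (auto simp: N_def)
  finally have h: "H2_sqnorm (of_int k * a1) (of_int (k+1) * a1) (gh u k l) \<le> a1 * K0 * r a1 * N" .
  have "H2_sqnorm (of_int l * a2) (of_int (l+1) * a2) (gv u k l)
      \<le> a2 * K0 * r a2 * ((cmod (c k l))\<^sup>2 + (cmod (c k (l+1)))\<^sup>2)"
    using bound[OF lt(2) sin_a2] unfolding u_def eigen_extension_simps len(2) K0_def r_def .
  also have "\<dots> \<le> a2 * K0 * r a2 * N"
    using a2_pos K0 r by (intro mult_left_mono) (auto simp: N_def)
  finally have v: "H2_sqnorm (of_int l * a2) (of_int (l+1) * a2) (gv u k l) \<le> a2 * K0 * r a2 * N" .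
  have loop_bound: "a3/2 * K0 * r a3 * (2 * (cmod (c k l))\<^sup>2) \<le> a3 * K0 * r a3 * N"
    using a3_pos K0 r by (auto simp: N_def intro!: mult_left_mono)
  have "H2_sqnorm 0 (a3/2) (gp u k l)
      \<le> a3/2 * K0 * r a3 * ((cmod (c k l))\<^sup>2 + (cmod (exp (- \<i> * of_real \<beta>) * c k l))\<^sup>2)"
    using bound[OF lt(3) sin_a3] unfolding u_def eigen_extension_simps len(3) K0_def r_def .
  then have p: "H2_sqnorm 0 (a3/2) (gp u k l) \<le> a3 * K0 * r a3 * N"
    using loop_bound unfolding norm_exp by simp
  have "H2_sqnorm (-a3/2) 0 (gm u k l)
      \<le> a3/2 * K0 * r a3 * ((cmod (exp (\<i> * of_real \<beta>) * c k l))\<^sup>2 + (cmod (c k l))\<^sup>2)"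
    using bound[OF lt(4) sin_a3] unfolding u_def eigen_extension_simps len(4) K0_def r_def .
  then have m: "H2_sqnorm (-a3/2) 0 (gm u k l) \<le> a3 * K0 * r a3 * N"
    using loop_bound unfolding norm_exp by simp
  show ?thesis
    using h v p m unfolding K0_def[symmetric] N_def[symmetric] by (simp add: algebra_simps)
qed

lemma H2_summable_eigen_extension:
  fixes c :: "int \<Rightarrow> int \<Rightarrow> complex" and \<beta> :: real
  assumes c: "in_l2 c"
  defines "u \<equiv> eigen_extension a1 a2 a3 \<beta> \<omega> c"
  shows "(\<lambda>(k, l). H2_sqnorm 0 (a3/2) (gp u k l) + H2_sqnorm (-a3/2) 0 (gm u k l)
     + H2_sqnorm (of_int k * a1) (of_int (k+1) * a1) (gh u k l)
     + H2_sqnorm (of_int l * a2) (of_int (l+1) * a2) (gv u k l)) summable_on UNIV"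
proof (rule summable_on_comparison_test)
  have "(\<lambda>x. (case x of (k, l) \<Rightarrow> (cmod (c k l))\<^sup>2) + (case x of (k, l) \<Rightarrow> (cmod (c (k+1) l))\<^sup>2)
      + (case x of (k, l) \<Rightarrow> (cmod (c k (l+1)))\<^sup>2)) summable_on UNIV"
    using c unfolding in_l2_def by (intro summable_on_add in_l2_shifts[OF c])
  then show "(\<lambda>x. 2 * (1 + \<omega>\<^sup>2 + \<omega> ^ 4)
      * (a1 * (1 + 2 / (sin (\<omega> * a1))\<^sup>2) + a2 * (1 + 2 / (sin (\<omega> * a2))\<^sup>2)
        + 2 * a3 * (1 + 2 / (sin (\<omega> * a3))\<^sup>2))
      * (case x of (k, l) \<Rightarrow> (cmod (c k l))\<^sup>2 + (cmod (c (k+1) l))\<^sup>2 + (cmod (c k (l+1)))\<^sup>2))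
      summable_on UNIV"
    unfolding case_prod_unfold by (intro summable_on_cmult_right) simp
qed (use H2_sqnorm_eigen_extension_le[of \<beta> c] in \<open>auto simp: u_def H2_sqnorm_nonneg add_nonneg_nonneg\<close>)

lemma in_H2G_eigen_extension:
  assumes "in_l2 c"
  shows "in_H2G a1 a2 a3 (eigen_extension a1 a2 a3 \<beta> \<omega> c)"
proof -
  let ?u = "eigen_extension a1 a2 a3 \<beta> \<omega> c"
  have "\<forall>k l. gh ?u (k-1) l (of_int k * a1) = gh ?u k l (of_int k * a1)
      \<and> gv ?u k l (of_int l * a2) = gh ?u k l (of_int k * a1)
      \<and> gv ?u k (l-1) (of_int l * a2) = gh ?u k l (of_int k * a1)
      \<and> gp ?u k l 0 = gh ?u k l (of_int k * a1)
      \<and> gm ?u k l 0 = gh ?u k l (of_int k * a1)"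
    by (simp add: eigen_extension_simps harmonic_edge_coeff_end sin_a1 sin_a2 sin_a3 algebra_simps)
  then show ?thesis
    unfolding in_H2G_def
    using H2_summable_eigen_extension[OF assms, where \<beta> = \<beta>]
    by (simp add: eigen_extension_simps H2_edge_harmonic)
qed

lemma loop_conditions_eigen_extension:
  "loop_conditions a3 \<beta> (eigen_extension a1 a2 a3 \<beta> \<omega> c)"
  unfolding loop_conditions_def eigen_extension_simps
proof (intro allI conjI)
  fix k l
  define E E' where "E = exp (- \<i> * of_real \<beta>)" and "E' = exp (\<i> * of_real \<beta>)"
  define Q where "Q = edge_coeff \<omega> a3 (c k l) (E * c k l)"
  have EE: "E * E' = 1" "E' * E = 1" by (simp_all add: E_def E'_def flip: exp_add)
  have coeff: "edge_coeff \<omega> a3 (E' * c k l) (c k l) = E' * Q"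
    using edge_coeff_scale[of \<omega> a3 E' "c k l" "E * c k l"] by (simp add: Q_def EE flip: mult.assoc)
  have shift: "- a3/2 - - a3 = a3/2 - 0" by simp
  have "harmonic \<omega> (E' * c k l) (E' * Q) (- a3) (- a3/2) = E' * harmonic \<omega> (c k l) Q 0 (a3/2)"
    by (rule harmonic_scaled_translate[OF shift])
  then show "harmonic \<omega> (c k l) (edge_coeff \<omega> a3 (c k l) (E * c k l)) 0 (a3/2)
      = E * harmonic \<omega> (E' * c k l) (edge_coeff \<omega> a3 (E' * c k l) (c k l)) (- a3) (- a3/2)"
    unfolding coeff Q_def[symmetric] by (simp add: EE flip: mult.assoc)
  have in_edge: "0 < a3/2" "a3/2 \<in> {0..a3/2}" "- a3/2 < 0" "- a3/2 \<in> {- a3/2..0}"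
    using a3_pos by simp_all
  have "d1 (- a3/2) 0 (harmonic \<omega> (E' * c k l) (E' * Q) (- a3)) (- a3/2)
      = harmonic \<omega> (E' * (of_real \<omega> * Q)) (E' * (- of_real \<omega> * c k l)) (- a3) (- a3/2)"
    unfolding d1_harmonic[OF in_edge(3,4)] by (simp add: algebra_simps)
  also have "\<dots> = E' * harmonic \<omega> (of_real \<omega> * Q) (- of_real \<omega> * c k l) 0 (a3/2)"
    by (rule harmonic_scaled_translate[OF shift])
  finally show "d1 0 (a3/2) (harmonic \<omega> (c k l) (edge_coeff \<omega> a3 (c k l) (E * c k l)) 0) (a3/2)
      = E * d1 (- a3/2) 0 (harmonic \<omega> (E' * c k l) (edge_coeff \<omega> a3 (E' * c k l) (c k l)) (- a3)) (- a3/2)"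
    unfolding coeff Q_def[symmetric] d1_harmonic[OF in_edge(1,2)] by (simp add: EE flip: mult.assoc)
qed

lemma eigen_extension_in_dom:
  assumes "in_l2 c" and "disc_system a1 a2 a3 \<mu> \<beta> \<omega> c"
  shows "in_dom a1 a2 a3 \<mu> \<beta> (eigen_extension a1 a2 a3 \<beta> \<omega> c)"
  using in_H2G_eigen_extension[OF assms(1)] loop_conditions_eigen_extension
    kirchhoff_flux_eq[OF in_H2G_eigen_extension[OF assms(1)] is_eig_eq_eigen_extension
      loop_conditions_eigen_extension] assms(2)
  unfolding in_dom_iff disc_system_iff vtx_eigen_extension by simp

end

theorem lemma2:
  fixes a1 a2 a3 \<beta> \<mu> \<omega> :: real
  assumes "a1 > 0" "a2 > 0" "a3 > 0" "\<mu> > 0" "\<omega> > 0"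
    and "\<forall>n::int. \<omega> \<noteq> pi * of_int n / a1"
    and "\<forall>n::int. \<omega> \<noteq> pi * of_int n / a2"
    and "\<forall>n::int. \<omega> \<noteq> pi * of_int n / a3"
  shows "(\<forall>u. in_dom a1 a2 a3 \<mu> \<beta> u \<longrightarrow>
            is_eig_eq a1 a2 a3 (\<omega>\<^sup>2) u \<longrightarrow>
             in_l2 (vtx a1 u) \<and> disc_system a1 a2 a3 \<mu> \<beta> \<omega> (vtx a1 u))
       \<and> (\<forall>c. in_l2 c \<and> disc_system a1 a2 a3 \<mu> \<beta> \<omega> c \<longrightarrow>
            (\<exists>u. in_dom a1 a2 a3 \<mu> \<beta> u \<and> is_eig_eq a1 a2 a3 (\<omega>\<^sup>2) u \<and> vtx a1 u = c))"
proof -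
  have "sin (\<omega> * a1) \<noteq> 0" "sin (\<omega> * a2) \<noteq> 0" "sin (\<omega> * a3) \<noteq> 0"
    using sin_mult_nonzero[OF assms(1,6)] sin_mult_nonzero[OF assms(2,7)]
      sin_mult_nonzero[OF assms(3,8)] by simp_all
  then interpret nonresonant a1 a2 a3 \<omega>
    using assms by unfold_locales simp_all
  show ?thesis
  proof (rule conjI; intro allI impI)
    fix u
    assume dom: "in_dom a1 a2 a3 \<mu> \<beta> u" and eig: "is_eig_eq a1 a2 a3 (\<omega>\<^sup>2) u"
    then show "in_l2 (vtx a1 u) \<and> disc_system a1 a2 a3 \<mu> \<beta> \<omega> (vtx a1 u)"
      using in_l2_vtx eigenfunction_disc_system unfolding in_dom_iff by blast
  next
    fix c
    assume "in_l2 c \<and> disc_system a1 a2 a3 \<mu> \<beta> \<omega> c"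
    then show "\<exists>u. in_dom a1 a2 a3 \<mu> \<beta> u \<and> is_eig_eq a1 a2 a3 (\<omega>\<^sup>2) u \<and> vtx a1 u = c"
      using eigen_extension_in_dom is_eig_eq_eigen_extension vtx_eigen_extension by blast
  qed
qed

end
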